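(* Let $T=T_{\mathrm{rg}}(\tau;\alpha,\beta)$ be an exceptional Jacobi operator in the rational gauge, let $\imath\in\{1,2,3,4\}$ and let $\phi$ be a quasi-rational eigenfunction of $T$ of asymptotic type $\imath$ with eigenvalue $\lambda$ and index $k$. Then $\lambda=\lambda_\imath(k;\alpha,\beta)$, where $\lambda_1(k;\alpha,\beta)=k(k+\alpha+\beta+1)$, $\lambda_2(k;\alpha,\beta)=(k-\alpha-\beta)(k+1)$, $\lambda_3(k;\alpha,\beta)=(k-\alpha)(k+\beta+1)$, $\lambda_4(k;\alpha,\beta)=(k-\beta)(k+\alpha+1)$.
   Context: $D=d/dx$; $\eta(x;\alpha,\beta)=\frac{\alpha+1}{x-1}+\frac{\beta+1}{x+1}$. For a real polynomial $\tau$ with $\tau(\pm1)\neq0$, $T_{\mathrm{ng}}(\tau;\alpha,\beta)=(x^2-1)\big(D^2-2\frac{\tau'}{\tau}D+\frac{\tau''}{\tau}+\eta(D-\frac{\tau'}{\tau})\big)+2x\frac{\tau'}{\tau}$ and $T_{\mathrm{rg}}(\tau;\alpha,\beta)=(x^2-1)(D^2+\eta D)+2(x^2-1)u'+2xu$, $u=\tau'/\tau$; it is an exceptional Jacobi operator if $T_{\mathrm{ng}}(\tau;\alpha,\beta)$ has a nonzero polynomial eigenfunction of degree $n$ for all but finitely many $n\in\mathbb{N}_0$. A quasi-rational eigenfunction is an eigenfunction $\phi$ ($T\phi=\lambda\phi$, $\lambda$ constant) with $w=\phi'/\phi$ rational. Its asymptotic type is 1 if $w$ is regular at $x=\pm1$,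 2 if $w$ has poles at both, 3 if pole at $x=1$ only, 4 if pole at $x=-1$ only. Its degree is $\deg\phi=\lim_{x\to\infty}xw(x)$. Let $\mu_1=1$, $\mu_2=(1-x)^{-\alpha}(1+x)^{-\beta}$, $\mu_3=(1-x)^{-\alpha}$, $\mu_4=(1+x)^{-\beta}$, with degrees $0,-\alpha-\beta,-\alpha,-\beta$. The index of a type $\imath$ quasi-rational eigenfunction $\phi$ is $k=\deg\phi-\deg\mu_\imath$. *)

theory Defs
  imports "HOL-Analysis.Analysis" "HOL-Computational_Algebra.Polynomial"
begin

definition eta :: "real \<Rightarrow> real \<Rightarrow> real \<Rightarrow> real" where
  "eta \<alpha> \<beta> x = (\<alpha> + 1) / (x - 1) + (\<beta> + 1) / (x + 1)"

definition regular_pt :: "real poly \<Rightarrow> real \<Rightarrow> bool" where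
  "regular_pt \<tau> x \<longleftrightarrow> x \<noteq> 1 \<and> x \<noteq> -1 \<and> poly \<tau> x \<noteq> 0"

definition T_ng :: "real poly \<Rightarrow> real \<Rightarrow> real \<Rightarrow> (real \<Rightarrow> real) \<Rightarrow> real \<Rightarrow> real" where
  "T_ng \<tau> \<alpha> \<beta> f x =
     (let u = poly (pderiv \<tau>) x / poly \<tau> x;
          v = poly (pderiv (pderiv \<tau>)) x / poly \<tau> x;
          f1 = deriv f x; f2 = deriv (deriv f) x
      in (x\<^sup>2 - 1) * (f2 - 2 * u * f1 + v * f x + eta \<alpha> \<beta> x * (f1 - u * f x))
         + 2 * x * u * f x)"

definition T_rg :: "real poly \<Rightarrow> real \<Rightarrow> real \<Rightarrow> (real \<Rightarrow> real) \<Rightarrow> real \<Rightarrow> real" where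
  "T_rg \<tau> \<alpha> \<beta> f x =
     (let u = (\<lambda>y. poly (pderiv \<tau>) y / poly \<tau> y)
      in (x\<^sup>2 - 1) * (deriv (deriv f) x + eta \<alpha> \<beta> x * deriv f x)
         + (2 * (x\<^sup>2 - 1) * deriv u x + 2 * x * u x) * f x)"

definition exceptional_jacobi :: "real poly \<Rightarrow> real \<Rightarrow> real \<Rightarrow> bool" where
  "exceptional_jacobi \<tau> \<alpha> \<beta> \<longleftrightarrow>
     poly \<tau> 1 \<noteq> 0 \<and> poly \<tau> (-1) \<noteq> 0 \<and>
     finite {n::nat. \<not> (\<exists>(y::real poly) (lam::real). y \<noteq> 0 \<and> degree y = n \<and>
        (\<forall>x. regular_pt \<tau> x \<longrightarrow> T_ng \<tau> \<alpha> \<beta> (poly y) x = lam * poly y x))}"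

definition rational_fun :: "(real \<Rightarrow> real) \<Rightarrow> bool" where
  "rational_fun w \<longleftrightarrow> (\<exists>p q :: real poly. q \<noteq> 0 \<and> w = (\<lambda>x. poly p x / poly q x))"

definition qr_eigenfunction ::
  "real poly \<Rightarrow> real \<Rightarrow> real \<Rightarrow> (real \<Rightarrow> real) \<Rightarrow> real \<Rightarrow> (real \<Rightarrow> real) \<Rightarrow> real \<Rightarrow> real \<Rightarrow> bool" where
  "qr_eigenfunction \<tau> \<alpha> \<beta> \<phi> lam w a b \<longleftrightarrow>
     a < b \<and> rational_fun w \<and>
     (\<forall>x\<in>{a<..<b}. \<phi> differentiable (at x) \<and> deriv \<phi> differentiable (at x) \<and>
        \<phi> x \<noteq> 0 \<and> deriv \<phi> x = w x * \<phi> x) \<and>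
     (\<forall>x\<in>{a<..<b}. regular_pt \<tau> x \<longrightarrow> T_rg \<tau> \<alpha> \<beta> \<phi> x = lam * \<phi> x)"

definition has_pole :: "(real \<Rightarrow> real) \<Rightarrow> real \<Rightarrow> bool" where
  "has_pole w c \<longleftrightarrow> filterlim w at_infinity (at c)"

definition asym_type :: "(real \<Rightarrow> real) \<Rightarrow> nat" where
  "asym_type w =
     (if \<not> has_pole w 1 \<and> \<not> has_pole w (-1) then 1
      else if has_pole w 1 \<and> has_pole w (-1) then 2
      else if has_pole w 1 then 3 else 4)"

text \<open>degree of a quasi-rational function with log-derivative w\<close>
definition qr_degree :: "(real \<Rightarrow> real) \<Rightarrow> real" where
  "qr_degree w = Lim at_top (\<lambda>x. x * w x)"

definition mu_degree :: "nat \<Rightarrow> real \<Rightarrow> real \<Rightarrow> real" where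
  "mu_degree i \<alpha> \<beta> = (if i = 1 then 0 else if i = 2 then - \<alpha> - \<beta> else if i = 3 then - \<alpha> else - \<beta>)"

definition jac_lambda :: "nat \<Rightarrow> real \<Rightarrow> real \<Rightarrow> real \<Rightarrow> real" where
  "jac_lambda i k \<alpha> \<beta> =
     (if i = 1 then k * (k + \<alpha> + \<beta> + 1)
      else if i = 2 then (k - \<alpha> - \<beta>) * (k + 1)
      else if i = 3 then (k - \<alpha>) * (k + \<beta> + 1)
      else (k - \<beta>) * (k + \<alpha> + 1))"

end

theory Submission
  imports Defs
begin

(* Writing w = phi'/phi = p/q and u = tau'/tau, the eigenvalue equation becomes the Riccati equation
   (x^2 - 1)(w' + w^2 + eta w) + 2(x^2 - 1)u' + 2xu = lam.  Clearing denominators gives a polynomial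
   identity, which holds identically because it holds on an interval.  Comparing coefficients at the
   top degree first forces deg p < deg q, so that x w(x) tends to s = deg phi, and then yields
   lam = s (s + alpha + beta + 1), the gauge term 2(x^2 - 1)u' + 2xu contributing nothing.  All four
   formulas lambda_i(s - deg mu_i) reduce to this same expression. *)

definition top_coeff :: "'a::zero poly \<Rightarrow> nat \<Rightarrow> 'a \<Rightarrow> bool" where
  "top_coeff p n c \<longleftrightarrow> degree p \<le> n \<and> coeff p n = c"

lemma top_coeff_cong: "top_coeff p m c \<Longrightarrow> m = n \<Longrightarrow> c = d \<Longrightarrow> top_coeff p n d"
  by simp

lemma top_coeff_add: "top_coeff p n a \<Longrightarrow> top_coeff q n b \<Longrightarrow> top_coeff (p + q) n (a + b)"
  by (simp add: top_coeff_def degree_add_le)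

lemma top_coeff_diff:
  fixes p q :: "'a::ab_group_add poly"
  shows "top_coeff p n a \<Longrightarrow> top_coeff q n b \<Longrightarrow> top_coeff (p - q) n (a - b)"
  by (simp add: top_coeff_def degree_diff_le)

lemma top_coeff_smult: "top_coeff p n c \<Longrightarrow> top_coeff (smult a p) n (a * c)"
  by (simp add: top_coeff_def order.trans[OF degree_smult_le])

lemma top_coeff_mult:
  fixes p q :: "'a::comm_semiring_0 poly"
  assumes p: "top_coeff p i a" and q: "top_coeff q j b"
  shows "top_coeff (p * q) (i + j) (a * b)"
proof -
  have "coeff (p * q) (i + j) = (\<Sum>k\<le>i + j. coeff p k * coeff q (i + j - k))"
    by (rule coeff_mult)
  also have "\<dots> = (\<Sum>k\<in>{i}. coeff p k * coeff q (i + j - k))"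
  proof (intro sum.mono_neutral_right ballI)
    fix k assume "k \<in> {..i + j} - {i}"
    then have "i < k \<or> j < i + j - k" by auto
    with p q show "coeff p k * coeff q (i + j - k) = 0"
      by (auto simp: top_coeff_def coeff_eq_0)
  qed auto
  finally show ?thesis
    using p q degree_mult_le[of p q] by (simp add: top_coeff_def)
qed

lemma top_coeff_power2: "top_coeff p n c \<Longrightarrow> top_coeff (p\<^sup>2) (n + n) (c\<^sup>2)"
  using top_coeff_mult[of p n c p n c] by (simp add: power2_eq_square)

definition euler :: "'a::{comm_semiring_1,semiring_no_zero_divisors} poly \<Rightarrow> 'a poly" where
  "euler p = pCons 0 (pderiv p)"

lemma poly_euler: "poly (euler p) x = x * poly (pderiv p) x"
  by (simp add: euler_def)

lemma coeff_euler: "coeff (euler p) n = of_nat n * coeff p n"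
  by (cases n) (simp_all add: euler_def coeff_pderiv)

lemma top_coeff_euler: "top_coeff p n c \<Longrightarrow> top_coeff (euler p) n (of_nat n * c)"
  by (auto simp: top_coeff_def coeff_euler coeff_eq_0 intro: degree_le)

(* The two parts of the Riccati equation with denominators cleared (times x^2 q^2, resp. x^2 tau^2);
   the extra factor x^2 lets derivatives enter only through the degree-preserving Euler operator. *)
definition riccati_poly :: "real \<Rightarrow> real \<Rightarrow> real poly \<Rightarrow> real poly \<Rightarrow> real poly" where
  "riccati_poly \<alpha> \<beta> p q =
     [:-1, 0, 1:] * ([:0, 1:] * (euler p * q - p * euler q) + [:0, 0, 1:] * p\<^sup>2)
     + [:0, 0, 1:] * [:\<alpha> - \<beta>, \<alpha> + \<beta> + 2:] * p * q"

definition gauge_poly :: "real poly \<Rightarrow> real poly" where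
  "gauge_poly \<tau> =
     smult 2 ([:-1, 0, 1:] * ((euler (euler \<tau>) - euler \<tau>) * \<tau> - (euler \<tau>)\<^sup>2)
              + [:0, 0, 1:] * (euler \<tau> * \<tau>))"

lemma top_coeff_riccati_poly:
  assumes p: "top_coeff p n a" and q: "top_coeff q (Suc n) b"
  shows "top_coeff (riccati_poly \<alpha> \<beta> p q) (2 * n + 4) (a\<^sup>2 + (\<alpha> + \<beta> + 1) * a * b)"
proof -
  have X: "top_coeff [:0, 1:] 1 (1::real)" and X2: "top_coeff [:0, 0, 1:] 2 (1::real)"
    and X2m1: "top_coeff [:-1, 0, 1:] 2 (1::real)"
    and E: "top_coeff [:\<alpha> - \<beta>, \<alpha> + \<beta> + 2:] 1 (\<alpha> + \<beta> + 2)"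
    by (simp_all add: top_coeff_def numeral_2_eq_2)
  have W: "top_coeff (euler p * q - p * euler q) (2 * n + 1) (- a * b)"
    by (rule top_coeff_cong[OF top_coeff_diff[OF top_coeff_mult[OF top_coeff_euler[OF p] q]
          top_coeff_mult[OF p top_coeff_euler[OF q]]]]) (simp_all add: algebra_simps)
  have "top_coeff ([:0, 1:] * (euler p * q - p * euler q) + [:0, 0, 1:] * p\<^sup>2) (2 * n + 2)
      (a\<^sup>2 - a * b)"
    by (rule top_coeff_cong[OF top_coeff_add[OF top_coeff_mult[OF X W]
          top_coeff_cong[OF top_coeff_mult[OF X2 top_coeff_power2[OF p]]]]]) simp_all
  from top_coeff_mult[OF X2m1 this]
  have "top_coeff ([:-1, 0, 1:] * ([:0, 1:] * (euler p * q - p * euler q) + [:0, 0, 1:] * p\<^sup>2))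
      (2 * n + 4) (a\<^sup>2 - a * b)"
    by (rule top_coeff_cong) simp_all
  moreover have "top_coeff ([:0, 0, 1:] * [:\<alpha> - \<beta>, \<alpha> + \<beta> + 2:] * p * q) (2 * n + 4)
      ((\<alpha> + \<beta> + 2) * a * b)"
    by (rule top_coeff_cong[OF top_coeff_mult[OF top_coeff_mult[OF top_coeff_mult[OF X2 E] p] q]]) simp_all
  ultimately show ?thesis
    unfolding riccati_poly_def
    by (rule top_coeff_cong[OF top_coeff_add]) (simp_all add: algebra_simps power2_eq_square)
qed

lemma top_coeff_gauge_poly:
  assumes \<tau>: "top_coeff \<tau> t c"
  shows "top_coeff (gauge_poly \<tau>) (2 * t + 2) 0"
proof -
  have X2: "top_coeff [:0, 0, 1:] 2 (1::real)" and X2m1: "top_coeff [:-1, 0, 1:] 2 (1::real)"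
    by (simp_all add: top_coeff_def numeral_2_eq_2)
  have D: "top_coeff (euler \<tau>) t (of_nat t * c)" by (rule top_coeff_euler[OF \<tau>])
  have "top_coeff ((euler (euler \<tau>) - euler \<tau>) * \<tau> - (euler \<tau>)\<^sup>2) (t + t) (- of_nat t * c\<^sup>2)"
    by (rule top_coeff_cong[OF top_coeff_diff[OF
          top_coeff_mult[OF top_coeff_diff[OF top_coeff_euler[OF D] D] \<tau>] top_coeff_power2[OF D]]])
      (simp_all add: algebra_simps power2_eq_square)
  from top_coeff_add[OF top_coeff_mult[OF X2m1 this] top_coeff_mult[OF X2 top_coeff_mult[OF D \<tau>]]]
  show ?thesis
    unfolding gauge_poly_def by (rule top_coeff_cong[OF top_coeff_smult]) (simp_all add: power2_eq_square)
qed

definition riccati_identity ::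
  "real \<Rightarrow> real \<Rightarrow> real poly \<Rightarrow> real \<Rightarrow> real poly \<Rightarrow> real poly \<Rightarrow> bool" where
  "riccati_identity \<alpha> \<beta> \<tau> lam p q \<longleftrightarrow>
     riccati_poly \<alpha> \<beta> p q * \<tau>\<^sup>2 + gauge_poly \<tau> * q\<^sup>2 = smult lam ([:0, 0, 1:] * q\<^sup>2 * \<tau>\<^sup>2)"

lemma riccati_identity_top_coeff:
  assumes I: "riccati_identity \<alpha> \<beta> \<tau> lam p q"
    and "\<tau> \<noteq> 0" and "degree p \<le> n" and "degree q \<le> Suc n"
  shows "(coeff p n)\<^sup>2 + (\<alpha> + \<beta> + 1) * coeff p n * coeff q (Suc n) = lam * (coeff q (Suc n))\<^sup>2"
proof -
  define a b c K where "a = coeff p n" and "b = coeff q (Suc n)" and "c = lead_coeff \<tau>"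
    and "K = 2 * n + 2 * degree \<tau> + 4"
  have p: "top_coeff p n a" and q: "top_coeff q (Suc n) b" and \<tau>: "top_coeff \<tau> (degree \<tau>) c"
    using assms by (simp_all add: top_coeff_def a_def b_def c_def)
  have X2: "top_coeff [:0, 0, 1:] 2 (1::real)"
    by (simp add: top_coeff_def numeral_2_eq_2)
  have "top_coeff (riccati_poly \<alpha> \<beta> p q * \<tau>\<^sup>2) K ((a\<^sup>2 + (\<alpha> + \<beta> + 1) * a * b) * c\<^sup>2)"
    by (rule top_coeff_cong[OF top_coeff_mult[OF top_coeff_riccati_poly[OF p q] top_coeff_power2[OF \<tau>]]])
      (simp_all add: K_def)
  moreover have "top_coeff (gauge_poly \<tau> * q\<^sup>2) K 0"
    by (rule top_coeff_cong[OF top_coeff_mult[OF top_coeff_gauge_poly[OF \<tau>] top_coeff_power2[OF q]]])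
      (simp_all add: K_def)
  moreover have "top_coeff (smult lam ([:0, 0, 1:] * q\<^sup>2 * \<tau>\<^sup>2)) K (lam * (b\<^sup>2 * c\<^sup>2))"
    by (rule top_coeff_cong[OF top_coeff_smult[OF top_coeff_mult[OF top_coeff_mult[OF X2
          top_coeff_power2[OF q]] top_coeff_power2[OF \<tau>]]]]) (simp_all add: K_def)
  ultimately have "(a\<^sup>2 + (\<alpha> + \<beta> + 1) * a * b) * c\<^sup>2 = lam * b\<^sup>2 * c\<^sup>2"
    using arg_cong[OF I[unfolded riccati_identity_def], of "\<lambda>f. coeff f K"]
    by (simp add: top_coeff_def)
  moreover have "c \<noteq> 0"
    using \<open>\<tau> \<noteq> 0\<close> by (simp add: c_def)
  ultimately show ?thesis
    by (simp add: a_def b_def)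
qed

lemma riccati_identity_degree_less:
  assumes I: "riccati_identity \<alpha> \<beta> \<tau> lam p q"
    and "\<tau> \<noteq> 0" and "p \<noteq> 0"
  shows "degree p < degree q"
proof (rule ccontr)
  assume "\<not> degree p < degree q"
  then have "coeff q (Suc (degree p)) = 0"
    by (simp add: coeff_eq_0)
  with riccati_identity_top_coeff[OF I \<open>\<tau> \<noteq> 0\<close>, of "degree p"] \<open>\<not> degree p < degree q\<close>
  have "(lead_coeff p)\<^sup>2 = 0"
    by simp
  with \<open>p \<noteq> 0\<close> show False
    by simp
qed

lemma riccati_identity_eigenvalue:
  assumes I: "riccati_identity \<alpha> \<beta> \<tau> lam p q"
    and "\<tau> \<noteq> 0" and "degree p < degree q"
  defines "s \<equiv> coeff p (degree q - 1) / lead_coeff q"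
  shows "lam = s * (s + \<alpha> + \<beta> + 1)"
proof -
  have q: "Suc (degree q - 1) = degree q" and "q \<noteq> 0"
    using \<open>degree p < degree q\<close> by auto
  have "(coeff p (degree q - 1))\<^sup>2 + (\<alpha> + \<beta> + 1) * coeff p (degree q - 1) * lead_coeff q
      = lam * (lead_coeff q)\<^sup>2"
    using riccati_identity_top_coeff[OF I \<open>\<tau> \<noteq> 0\<close>, of "degree q - 1"] \<open>degree p < degree q\<close>
    unfolding q by simp
  with \<open>q \<noteq> 0\<close> show ?thesis
    by (simp add: s_def field_simps power2_eq_square)
qed

lemma tendsto_poly_ratio_at_infinity:
  fixes p q :: "'a::real_normed_field poly"
  assumes "q \<noteq> 0" and "degree p \<le> degree q"
  shows "((\<lambda>x. poly p x / poly q x) \<longlongrightarrow> coeff p (degree q) / lead_coeff q) at_infinity"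
proof (cases "degree p < degree q")
  case True
  then show ?thesis
    using poly_divide_tendsto_0_at_infinity[OF True] by (simp add: coeff_eq_0)
next
  case False
  with assms have deg: "degree p = degree q" by simp
  have "((\<lambda>x. (poly p x / x ^ degree q) / (poly q x / x ^ degree q))
      \<longlongrightarrow> lead_coeff p / lead_coeff q) at_infinity"
    using assms poly_divide_tendsto_aux[of p] poly_divide_tendsto_aux[of q] deg
    by (intro tendsto_divide) auto
  moreover have "\<forall>\<^sub>F x in at_infinity.
      (poly p x / x ^ degree q) / (poly q x / x ^ degree q) = poly p x / poly q x"
    by (rule eventually_at_infinityI[of 1]) (auto simp: norm_ge_zero)
  ultimately show ?thesis
    using deg by (auto intro: Lim_transform_eventually)
qed

lemma qr_degree_poly_ratio:
  fixes p q :: "real poly"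
  assumes "degree p < degree q"
  shows "qr_degree (\<lambda>x. poly p x / poly q x) = coeff p (degree q - 1) / lead_coeff q"
proof -
  have "q \<noteq> 0" and deg: "degree (pCons 0 p) \<le> degree q"
    and top: "coeff (pCons 0 p) (degree q) = coeff p (degree q - 1)"
    using assms by (auto simp: degree_pCons_eq_if coeff_pCons split: nat.split)
  have "((\<lambda>x. poly (pCons 0 p) x / poly q x) \<longlongrightarrow> coeff p (degree q - 1) / lead_coeff q)
      at_infinity"
    using tendsto_poly_ratio_at_infinity[OF \<open>q \<noteq> 0\<close> deg] unfolding top .
  then have "((\<lambda>x. x * (poly p x / poly q x)) \<longlongrightarrow> coeff p (degree q - 1) / lead_coeff q) at_top"
    by (auto intro: filterlim_mono[OF _ order.refl at_top_le_at_infinity])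
  then show ?thesis
    unfolding qr_degree_def by (intro tendsto_Lim) simp_all
qed

lemma eta_eq:
  assumes "x \<noteq> 1" and "x \<noteq> -1"
  shows "eta \<alpha> \<beta> x = ((\<alpha> - \<beta>) + (\<alpha> + \<beta> + 2) * x) / (x\<^sup>2 - 1)"
proof -
  have "x - 1 \<noteq> 0" and "x + 1 \<noteq> 0" and "x\<^sup>2 - 1 = (x - 1) * (x + 1)"
    using assms by (auto simp: algebra_simps power2_eq_square)
  then show ?thesis
    by (simp add: eta_def field_simps)
qed

lemma poly_riccati_poly:
  assumes "poly q x \<noteq> 0" and "x \<noteq> 1" and "x \<noteq> -1"
  shows "poly (riccati_poly \<alpha> \<beta> p q) x = x\<^sup>2 * (poly q x)\<^sup>2 * ((x\<^sup>2 - 1) *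
           (poly (pderiv p * q - p * pderiv q) x / (poly q x)\<^sup>2 + (poly p x / poly q x)\<^sup>2
            + eta \<alpha> \<beta> x * (poly p x / poly q x)))"
proof -
  have "x * x - 1 \<noteq> 0"
    using assms(2,3) by (auto simp: algebra_simps square_eq_1_iff)
  with assms show ?thesis
    by (simp add: eta_eq riccati_poly_def poly_euler field_simps power2_eq_square)
qed

lemma poly_gauge_poly:
  assumes "poly \<tau> x \<noteq> 0"
  shows "poly (gauge_poly \<tau>) x = x\<^sup>2 * (poly \<tau> x)\<^sup>2 *
           (2 * (x\<^sup>2 - 1) * (poly (pderiv (pderiv \<tau>) * \<tau> - (pderiv \<tau>)\<^sup>2) x / (poly \<tau> x)\<^sup>2)
            + 2 * x * (poly (pderiv \<tau>) x / poly \<tau> x))"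
  using assms by (simp add: gauge_poly_def euler_def pderiv_pCons field_simps power2_eq_square)

lemma deriv_deriv_of_log_deriv:
  fixes \<phi> w :: "real \<Rightarrow> real"
  assumes "open S" and "x \<in> S" and log_deriv: "\<And>y. y \<in> S \<Longrightarrow> deriv \<phi> y = w y * \<phi> y"
    and "\<phi> differentiable (at x)" and "(w has_real_derivative w') (at x)"
  shows "deriv (deriv \<phi>) x = (w' + (w x)\<^sup>2) * \<phi> x"
proof -
  have "(\<phi> has_real_derivative deriv \<phi> x) (at x)"
    using \<open>\<phi> differentiable (at x)\<close> by (simp add: DERIV_deriv_iff_real_differentiable)
  with \<open>(w has_real_derivative w') (at x)\<close>
  have "((\<lambda>y. w y * \<phi> y) has_real_derivative w' * \<phi> x + deriv \<phi> x * w x) (at x)"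
    by (rule DERIV_mult)
  then have "(deriv \<phi> has_real_derivative w' * \<phi> x + deriv \<phi> x * w x) (at x)"
    by (rule has_field_derivative_transform_within_open[OF _ \<open>open S\<close> \<open>x \<in> S\<close>])
      (simp add: log_deriv)
  then show ?thesis
    using log_deriv[OF \<open>x \<in> S\<close>] by (simp add: DERIV_imp_deriv algebra_simps power2_eq_square)
qed

lemma qr_eigenfunction_riccati_equation:
  assumes ef: "qr_eigenfunction \<tau> \<alpha> \<beta> \<phi> lam w a b" and w: "w = (\<lambda>x. poly p x / poly q x)"
    and x: "x \<in> {a<..<b}" "regular_pt \<tau> x" "poly q x \<noteq> 0"
  shows "(x\<^sup>2 - 1) *
         (poly (pderiv p * q - p * pderiv q) x / (poly q x)\<^sup>2 + (w x)\<^sup>2 + eta \<alpha> \<beta> x * w x)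
       + (2 * (x\<^sup>2 - 1) * (poly (pderiv (pderiv \<tau>) * \<tau> - (pderiv \<tau>)\<^sup>2) x / (poly \<tau> x)\<^sup>2)
          + 2 * x * (poly (pderiv \<tau>) x / poly \<tau> x)) = lam"
    (is "?riccati = lam")
proof -
  from ef x have "\<phi> differentiable (at x)" and "\<phi> x \<noteq> 0"
    and log_deriv: "\<And>y. y \<in> {a<..<b} \<Longrightarrow> deriv \<phi> y = w y * \<phi> y"
    and eigen: "T_rg \<tau> \<alpha> \<beta> \<phi> x = lam * \<phi> x"
    by (auto simp: qr_eigenfunction_def)
  have "poly \<tau> x \<noteq> 0"
    using x(2) by (simp add: regular_pt_def)
  have w': "(w has_real_derivative poly (pderiv p * q - p * pderiv q) x / (poly q x)\<^sup>2) (at x)"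
    unfolding w by (rule derivative_eq_intros refl | use x(3) in \<open>simp add: power2_eq_square\<close>)+
  have u': "((\<lambda>y. poly (pderiv \<tau>) y / poly \<tau> y) has_real_derivative
      poly (pderiv (pderiv \<tau>) * \<tau> - (pderiv \<tau>)\<^sup>2) x / (poly \<tau> x)\<^sup>2) (at x)"
    by (rule derivative_eq_intros refl | use \<open>poly \<tau> x \<noteq> 0\<close> in \<open>simp add: power2_eq_square\<close>)+
  have "deriv (deriv \<phi>) x = (poly (pderiv p * q - p * pderiv q) x / (poly q x)\<^sup>2 + (w x)\<^sup>2) * \<phi> x"
    by (rule deriv_deriv_of_log_deriv[OF _ x(1) log_deriv \<open>\<phi> differentiable (at x)\<close> w']) auto
  with eigen have "?riccati * \<phi> x = lam * \<phi> x"
    unfolding T_rg_def Let_def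
    by (simp add: DERIV_imp_deriv[OF u'] log_deriv[OF x(1)] algebra_simps)
  with \<open>\<phi> x \<noteq> 0\<close> show ?thesis
    by simp
qed

lemma poly_eq_if_infinite_agree:
  fixes p q :: "'a::idom poly"
  assumes "infinite {x. poly p x = poly q x}"
  shows "p = q"
  using assms poly_roots_finite[of "p - q"] by auto

lemma qr_eigenfunction_riccati_identity:
  assumes ef: "qr_eigenfunction \<tau> \<alpha> \<beta> \<phi> lam w a b" and w: "w = (\<lambda>x. poly p x / poly q x)"
    and "q \<noteq> 0" and "\<tau> \<noteq> 0"
  shows "riccati_identity \<alpha> \<beta> \<tau> lam p q"
  unfolding riccati_identity_def
proof (rule poly_eq_if_infinite_agree)
  define Z where "Z = q * \<tau> * [:-1, 0, 1:]"
  have "Z \<noteq> 0"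
    unfolding Z_def mult_eq_0_iff using assms by simp
  moreover have "a < b"
    using ef by (simp add: qr_eigenfunction_def)
  ultimately have "infinite ({a<..<b} - {x. poly Z x = 0})"
    using poly_roots_finite by (intro Diff_infinite_finite) auto
  moreover have "{a<..<b} - {x. poly Z x = 0} \<subseteq>
      {x. poly (riccati_poly \<alpha> \<beta> p q * \<tau>\<^sup>2 + gauge_poly \<tau> * q\<^sup>2) x
        = poly (smult lam ([:0, 0, 1:] * q\<^sup>2 * \<tau>\<^sup>2)) x}"
  proof safe
    fix x assume x: "x \<in> {a<..<b}" and "poly Z x \<noteq> 0"
    then have "poly q x \<noteq> 0" "poly \<tau> x \<noteq> 0" "x \<noteq> 1" "x \<noteq> -1"
      by (auto simp: Z_def)
    then show "poly (riccati_poly \<alpha> \<beta> p q * \<tau>\<^sup>2 + gauge_poly \<tau> * q\<^sup>2) x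
        = poly (smult lam ([:0, 0, 1:] * q\<^sup>2 * \<tau>\<^sup>2)) x"
      using arg_cong[OF qr_eigenfunction_riccati_equation[OF ef w x, unfolded regular_pt_def],
          of "\<lambda>r. x\<^sup>2 * (poly q x)\<^sup>2 * (poly \<tau> x)\<^sup>2 * r"]
      by (simp add: poly_riccati_poly poly_gauge_poly w algebra_simps power2_eq_square)
  qed
  ultimately show "infinite {x. poly (riccati_poly \<alpha> \<beta> p q * \<tau>\<^sup>2 + gauge_poly \<tau> * q\<^sup>2) x
      = poly (smult lam ([:0, 0, 1:] * q\<^sup>2 * \<tau>\<^sup>2)) x}"
    using finite_subset by blast
qed

lemma qr_eigenfunction_proper_fraction:
  assumes ef: "qr_eigenfunction \<tau> \<alpha> \<beta> \<phi> lam w a b" and "\<tau> \<noteq> 0"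
  obtains p q where "w = (\<lambda>x. poly p x / poly q x)" and "degree p < degree q"
proof -
  obtain p q where "q \<noteq> 0" and w: "w = (\<lambda>x. poly p x / poly q x)"
    using ef by (auto simp: qr_eigenfunction_def rational_fun_def)
  show ?thesis
  proof (cases "p = 0")
    case True
    with w show ?thesis
      by (intro that[of 0 "[:0, 1:]"]) auto
  next
    case False
    with w show ?thesis
      using riccati_identity_degree_less[OF
          qr_eigenfunction_riccati_identity[OF ef w \<open>q \<noteq> 0\<close> \<open>\<tau> \<noteq> 0\<close>] \<open>\<tau> \<noteq> 0\<close>] that
      by blast
  qed
qed

lemma jac_lambda_shifted_degree:
  assumes "i \<in> {1, 2, 3, 4}"
  shows "jac_lambda i (s - mu_degree i \<alpha> \<beta>) \<alpha> \<beta> = s * (s + \<alpha> + \<beta> + 1)"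
  using assms by (auto simp: jac_lambda_def mu_degree_def algebra_simps)

theorem mainTheorem7:
  fixes \<tau> :: "real poly" and \<alpha> \<beta> lam a b :: real
    and \<phi> w :: "real \<Rightarrow> real" and i :: nat
  assumes "exceptional_jacobi \<tau> \<alpha> \<beta>"
    and "qr_eigenfunction \<tau> \<alpha> \<beta> \<phi> lam w a b"
    and "i \<in> {1,2,3,4}"
    and "asym_type w = i"
  shows "lam = jac_lambda i (qr_degree w - mu_degree i \<alpha> \<beta>) \<alpha> \<beta>"
proof -
  have "\<tau> \<noteq> 0"
    using assms(1) by (auto simp: exceptional_jacobi_def)
  obtain p q where w: "w = (\<lambda>x. poly p x / poly q x)" and deg: "degree p < degree q"
    using qr_eigenfunction_proper_fraction[OF assms(2) \<open>\<tau> \<noteq> 0\<close>] .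
  then have "q \<noteq> 0"
    by auto
  have "lam = qr_degree w * (qr_degree w + \<alpha> + \<beta> + 1)"
    using riccati_identity_eigenvalue[OF
        qr_eigenfunction_riccati_identity[OF assms(2) w \<open>q \<noteq> 0\<close> \<open>\<tau> \<noteq> 0\<close>] \<open>\<tau> \<noteq> 0\<close> deg]
    by (simp add: w qr_degree_poly_ratio[OF deg])
  then show ?thesis
    using jac_lambda_shifted_degree[OF assms(3)] by simp
qed

end
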